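(* Let $\mathbf{M}=S^{s-1}=\{x\in\mathbf{R}^s:\|x\|=1\}$, whose cutlocus is $\mathbf{C}=\{0\}$ and nearest-point map is $\pi(t)=t/\|t\|$ ($t\neq0$); here $m=s-1$. Let $(t_n)$ in $\mathbf{R}^s$, random vectors $\tilde t_n$ in $\mathbf{R}^s$, and nonsingular $s\times s$ matrices $B_n\to0$ with $Z_n=B_n^{-1}(\tilde t_n-t_n)\xrightarrow{\mathcal D}Z$. Assume $t_n\neq0$, $d(t_n,\mathbf{M})\le D$ for all $n$, and $\|B_n\|/\|t_n\|\to0$. Put $\mu_n=\pi(t_n)$, $\tilde\mu_n=\pi(\tilde t_n)$ and $$G_n=\|t_n\|\tan_{\mu_n}+\varepsilon_n(\mathrm{I}_s-\tan_{\mu_n}),$$ where $\varepsilon_n=O(\|t_n\|)$ (in particular one may take $\varepsilon_n=\|t_n\|$, giving $G_n=\|t_n\|\mathrm{I}_s$). Let $\Gamma_n$ be $s\times s$ matrices with $$\|\Gamma_n\|\,\|B_n\|^2/\|t_n\|\to0.$$ Then: (1) $\Gamma_nG_n(\tilde\mu_n-\mu_n)-(\Gamma_n\tan_{\mu_n}B_n)Z_n\to0$ in probability. If moreover $Z$ is spherical and $\Gamma_n\tan_{\mu_n}B_nB_n^T\tan_{\mu_n}\Gamma_n^T=\tan_{\mu_n}$ for all $n$, then (2) if $\mu_n\to\mu\in\mathbf{M}$, $\Gamma_nG_n(\tilde\mu_n-\mu_n)=(\Gamma_n\tan_{\mu_n}B_n)Z_n+o_P(1)\xrightarrow{\mathcal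 D}\tan_\mu Z$; and (3) $(\tilde\mu_n-\mu_n)^TG_n\Gamma_n^T\Gamma_nG_n(\tilde\mu_n-\mu_n)\xrightarrow{\mathcal D}\zeta_{s-1}^2$.
   Context: $\|\cdot\|$: Euclidean norm / operator norm; $d(t,\mathbf{M})=\inf_{x\in\mathbf{M}}\|t-x\|$. For $\mu\in S^{s-1}$, $\tan_\mu=\mathrm{I}_s-\mu\mu^T$ is the orthogonal projection onto the tangent space $T_\mu S^{s-1}=\mu^\perp$. $Z$ spherical: $HZ\overset{\mathcal D}{=}Z$ for all orthogonal $s\times s$ matrices $H$; $\zeta_{m}^2$ is the distribution of $\sum_{i=1}^{m}Z_i^2$ for $Z=(Z_1,\dots,Z_s)$. $o_P(1)$: term tending to $0$ in probability. *)

theory Defs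
  imports "HOL-Probability.Probability" "HOL-Library.Landau_Symbols"
begin

text \<open>Nearest-point map of the unit sphere (value at the cut locus 0 is 0, irrelevant).\<close>
definition sph_proj :: "real^'n \<Rightarrow> real^'n" where
  "sph_proj t = (1 / norm t) *\<^sub>R t"

definition outer :: "real^'n \<Rightarrow> real^'n \<Rightarrow> real^'n^'n" where
  "outer u v = (\<chi> i j. u $ i * v $ j)"

definition tanproj :: "real^'n \<Rightarrow> real^'n^'n" where
  "tanproj mu = mat 1 - outer mu mu"

definition opnorm :: "real^'n^'m \<Rightarrow> real" where
  "opnorm A = onorm (\<lambda>x. A *v x)"

definition conv_distr ::
  "(nat \<Rightarrow> 'a measure) \<Rightarrow> (nat \<Rightarrow> 'a \<Rightarrow> 'b::topological_space) \<Rightarrow> 'b measure \<Rightarrow> bool" where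
  "conv_distr M X L \<longleftrightarrow>
     (\<forall>f :: 'b \<Rightarrow> real. continuous_on UNIV f \<and> bounded (range f) \<longrightarrow>
        (\<lambda>n. \<integral>\<omega>. f (X n \<omega>) \<partial>M n) \<longlonglongrightarrow> (\<integral>x. f x \<partial>L))"

definition conv_prob_zero ::
  "(nat \<Rightarrow> 'a measure) \<Rightarrow> (nat \<Rightarrow> 'a \<Rightarrow> 'b::real_normed_vector) \<Rightarrow> bool" where
  "conv_prob_zero M Y \<longleftrightarrow>
     (\<forall>e>0. (\<lambda>n. measure (M n) {\<omega> \<in> space (M n). norm (Y n \<omega>) > e}) \<longlonglongrightarrow> 0)"

definition spherical :: "(real^'n) measure \<Rightarrow> bool" where
  "spherical L \<longleftrightarrow> (\<forall>H::real^'n^'n. orthogonal_matrix H \<longrightarrow> distr L borel (\<lambda>z. H *v z) = L)"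

text \<open>zeta^2_{s-1}: law of the sum of squares of the first s-1 coordinates
  (coordinates ordered by the well-order on the index type; the last one is Max UNIV).\<close>
definition zeta2_last_dropped :: "(real^'n::{finite,wellorder}) measure \<Rightarrow> real measure" where
  "zeta2_last_dropped L = distr L borel (\<lambda>z. \<Sum>i\<in>UNIV - {Max UNIV}. (z $ i)\<^sup>2)"

end

theory Submission
  imports Defs
begin

text \<open>
  Write \<open>tt n = t n + B n *v Z n\<close>. The projection \<open>\<pi> x = x /\<^sub>R norm x\<close> satisfies
  \<open>\<pi> (t + h) = \<pi> t + tanproj (\<pi> t) *v h /\<^sub>R norm t + \<rho>\<close> with
  \<open>norm \<rho> \<le> 10 * (norm h)\<^sup>2 / (norm t)\<^sup>2\<close> for every \<open>h\<close>, and \<open>G n\<close> acts as \<open>norm (t n)\<close>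
  on the tangent space. Hence \<open>Gam n *v (G n *v (mut n - mu n)) = A n *v Z n + R n\<close> with
  \<open>A n = Gam n ** tanproj (mu n) ** B n\<close> and \<open>R n\<close> of order
  \<open>opnorm (Gam n) * (opnorm (B n))\<^sup>2 / norm (t n) * (norm (Z n))\<^sup>2\<close>, which tends to 0 in
  probability because \<open>Z n\<close> converges in distribution and is therefore tight.

  If \<open>A n ** transpose (A n) = tanproj (mu n)\<close>, the \<open>A n\<close> are bounded, so every subsequence
  has a further one along which \<open>A n \<longlonglongrightarrow> A\<close> and \<open>mu n \<longlonglongrightarrow> \<mu>\<close> with
  \<open>A ** transpose A = tanproj \<mu>\<close>, i.e. \<open>A = tanproj \<mu> ** U\<close> for an orthogonal \<open>U\<close>.
  By Slutsky's lemma \<open>A n *v Z n + R n\<close> converges there to \<open>A *v Z\<close>, which has the law of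
  \<open>tanproj \<mu> *v Z\<close> because the law of \<open>Z\<close> is spherical. A Householder reflection taking
  \<open>\<mu>\<close> to the last basis vector turns \<open>(norm (tanproj \<mu> *v Z))\<^sup>2\<close> into the sum of the
  first \<open>s - 1\<close> squared coordinates of a vector with the law of \<open>Z\<close>.
\<close>

lemma power2_norm_vec: "(norm (x::'a::real_inner^'n))\<^sup>2 = (\<Sum>i\<in>UNIV. (norm (x $ i))\<^sup>2)"
  by (simp add: power2_norm_eq_inner inner_vec_def)

lemma norm_matrix_vector_mult_le: "norm ((A::real^'n^'m) *v x) \<le> norm A * norm x"
proof -
  have "(norm (A *v x))\<^sup>2 = (\<Sum>i\<in>UNIV. (A$i \<bullet> x)\<^sup>2)"
    by (simp add: power2_norm_vec matrix_mult_dot)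
  also have "\<dots> \<le> (\<Sum>i\<in>UNIV. (norm (A$i))\<^sup>2 * (norm x)\<^sup>2)"
  proof (rule sum_mono)
    fix i
    have "\<bar>A$i \<bullet> x\<bar>\<^sup>2 \<le> (norm (A$i) * norm x)\<^sup>2"
      using Cauchy_Schwarz_ineq2 by (intro power_mono) auto
    then show "(A$i \<bullet> x)\<^sup>2 \<le> (norm (A$i))\<^sup>2 * (norm x)\<^sup>2"
      by (simp add: power_mult_distrib)
  qed
  also have "\<dots> = (norm A * norm x)\<^sup>2"
    by (simp add: power2_norm_vec[of A] power_mult_distrib sum_distrib_right)
  finally show ?thesis
    by (rule power2_le_imp_le) simp
qed

lemma norm_matrix_vector_mult_le_opnorm: "norm ((A::real^'n^'m) *v x) \<le> opnorm A * norm x"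
  unfolding opnorm_def by (rule onorm[OF matrix_vector_mul_bounded_linear])

lemma opnorm_nonneg: "0 \<le> opnorm (A::real^'n^'m)"
  unfolding opnorm_def by (rule onorm_pos_le[OF matrix_vector_mul_bounded_linear])

lemma matrix_mul_matrix_inv_right:
  "invertible (A::'a::semiring_1^'n^'n) \<Longrightarrow> A ** matrix_inv A = mat 1"
  unfolding matrix_inv_def invertible_def by (rule someI2_ex) auto

lemma inner_transpose_matrix_vector_mult: "(transpose A *v x) \<bullet> y = x \<bullet> ((A::real^'n^'m) *v y)"
  by (simp add: dot_lmul_matrix)

declare transpose_matrix_vector [simp del] vector_transpose_matrix [simp del]

section \<open>Tangent projections\<close>

lemma outer_mult_vector: "outer u v *v x = (v \<bullet> x) *\<^sub>R u"
  by (simp add: outer_def matrix_vector_mult_def vec_eq_iff inner_vec_def sum_distrib_left algebra_simps)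

lemma tanproj_mult_vector: "tanproj \<mu> *v x = x - (\<mu> \<bullet> x) *\<^sub>R \<mu>"
  by (simp add: tanproj_def matrix_vector_mult_diff_rdistrib outer_mult_vector)

lemma transpose_outer: "transpose (outer u v) = outer v u"
  by (simp add: outer_def transpose_def vec_eq_iff mult.commute)

lemma transpose_tanproj [simp]: "transpose (tanproj \<mu>) = tanproj \<mu>"
  by (simp add: tanproj_def transpose_outer vec_eq_iff transpose_def outer_def mat_def)

lemma norm_tanproj_mult_sq:
  assumes "norm \<mu> = 1"
  shows "(norm (tanproj \<mu> *v x))\<^sup>2 = (norm x)\<^sup>2 - (\<mu> \<bullet> x)\<^sup>2"
proof -
  have \<mu>\<mu>: "\<mu> \<bullet> \<mu> = 1" using assms by (simp add: power2_norm_eq_inner[symmetric])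
  have "(norm (tanproj \<mu> *v x))\<^sup>2 = (x - (\<mu> \<bullet> x) *\<^sub>R \<mu>) \<bullet> (x - (\<mu> \<bullet> x) *\<^sub>R \<mu>)"
    by (simp add: tanproj_mult_vector power2_norm_eq_inner)
  also have "\<dots> = x \<bullet> x - 2 * (\<mu> \<bullet> x) * (\<mu> \<bullet> x) + (\<mu> \<bullet> x)\<^sup>2 * (\<mu> \<bullet> \<mu>)"
    by (simp add: inner_diff_left inner_diff_right inner_commute power2_eq_square algebra_simps)
  finally show ?thesis using \<mu>\<mu> by (simp add: dot_square_norm power2_eq_square)
qed

lemma norm_tanproj_mult_le:
  assumes "norm \<mu> = 1"
  shows "norm (tanproj \<mu> *v x) \<le> norm x"
proof -
  have "(norm (tanproj \<mu> *v x))\<^sup>2 \<le> (norm x)\<^sup>2"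
    using norm_tanproj_mult_sq[OF assms, of x] by simp
  then show ?thesis by (rule power2_le_imp_le) simp
qed

lemma tanproj_mult_self: "norm \<mu> = 1 \<Longrightarrow> tanproj \<mu> *v \<mu> = 0"
  by (simp add: tanproj_mult_vector power2_norm_eq_inner[symmetric])

lemma tanproj_mult_idem: "norm \<mu> = 1 \<Longrightarrow> tanproj \<mu> *v (tanproj \<mu> *v x) = tanproj \<mu> *v x"
  by (simp add: tanproj_mult_vector inner_diff_right power2_norm_eq_inner[symmetric])

lemma tanproj_blend_mult_tanproj:
  assumes "norm \<mu> = 1"
  shows "(a *\<^sub>R tanproj \<mu> + b *\<^sub>R (mat 1 - tanproj \<mu>)) *v (tanproj \<mu> *v h) = a *\<^sub>R (tanproj \<mu> *v h)"
  using tanproj_mult_idem[OF assms, of h]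
  by (simp add: matrix_vector_mult_add_rdistrib matrix_vector_mult_diff_rdistrib
      scaleR_matrix_vector_assoc[symmetric])

lemma norm_tanproj_blend_mult_le:
  assumes \<mu>: "norm \<mu> = 1"
  shows "norm ((a *\<^sub>R tanproj \<mu> + b *\<^sub>R (mat 1 - tanproj \<mu>)) *v y) \<le> (\<bar>a\<bar> + \<bar>b\<bar>) * norm y"
proof -
  have "(a *\<^sub>R tanproj \<mu> + b *\<^sub>R (mat 1 - tanproj \<mu>)) *v y = a *\<^sub>R (tanproj \<mu> *v y) + (b * (\<mu> \<bullet> y)) *\<^sub>R \<mu>"
    by (simp add: matrix_vector_mult_add_rdistrib matrix_vector_mult_diff_rdistrib
        scaleR_matrix_vector_assoc[symmetric] tanproj_mult_vector)
  also have "norm \<dots> \<le> \<bar>a\<bar> * norm (tanproj \<mu> *v y) + \<bar>b\<bar> * \<bar>\<mu> \<bullet> y\<bar>"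
    using norm_triangle_ineq[of "a *\<^sub>R (tanproj \<mu> *v y)" "(b * (\<mu> \<bullet> y)) *\<^sub>R \<mu>"] \<mu>
    by (simp add: abs_mult)
  also have "\<dots> \<le> \<bar>a\<bar> * norm y + \<bar>b\<bar> * norm y"
    using norm_tanproj_mult_le[OF \<mu>, of y] Cauchy_Schwarz_ineq2[of \<mu> y] \<mu>
    by (intro add_mono mult_left_mono) auto
  finally show ?thesis
    by (simp add: algebra_simps)
qed

lemma transpose_tanproj_blend:
  "transpose (a *\<^sub>R tanproj \<mu> + b *\<^sub>R (mat 1 - tanproj \<mu>)) = a *\<^sub>R tanproj \<mu> + b *\<^sub>R (mat 1 - tanproj \<mu>)"
  by (simp add: transpose_def vec_eq_iff tanproj_def outer_def mat_def mult.commute)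

lemma quadratic_form_eq_power2_norm:
  fixes G :: "real^'n^'n" and \<Gamma> :: "real^'n^'m"
  assumes "transpose G = G"
  shows "d \<bullet> ((G ** transpose \<Gamma> ** \<Gamma> ** G) *v d) = (norm (\<Gamma> *v (G *v d)))\<^sup>2"
proof -
  have "d \<bullet> ((G ** transpose \<Gamma> ** \<Gamma> ** G) *v d) = (transpose G *v d) \<bullet> (transpose \<Gamma> *v (\<Gamma> *v (G *v d)))"
    by (simp add: matrix_vector_mul_assoc matrix_mul_assoc inner_transpose_matrix_vector_mult)
  also have "\<dots> = (\<Gamma> *v (G *v d)) \<bullet> (\<Gamma> *v (G *v d))"
    using assms by (simp add: inner_commute[of "G *v d"] inner_transpose_matrix_vector_mult)
  finally show ?thesis
    by (simp add: power2_norm_eq_inner)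
qed

lemma transpose_mult_eq_zero_if_mult_transpose_eq_tanproj:
  fixes A :: "real^'n^'m"
  assumes AA: "A ** transpose A = tanproj \<nu>" and \<nu>: "norm \<nu> = 1"
  shows "transpose A *v \<nu> = 0"
proof -
  have "(transpose A *v \<nu>) \<bullet> (transpose A *v \<nu>) = \<nu> \<bullet> ((A ** transpose A) *v \<nu>)"
    by (simp add: inner_transpose_matrix_vector_mult matrix_vector_mul_assoc)
  also have "\<dots> = 0"
    using AA tanproj_mult_self[OF \<nu>] by simp
  finally show ?thesis by simp
qed

lemma exists_unit_kernel_vector:
  fixes A :: "real^'n^'n"
  assumes "transpose A *v \<nu> = 0" and "\<nu> \<noteq> 0"
  shows "\<exists>u. u \<bullet> u = 1 \<and> A *v u = 0"
proof -
  have "\<not> (\<forall>x. A *v x = 0 \<longrightarrow> x = 0)"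
  proof
    assume "\<forall>x. A *v x = 0 \<longrightarrow> x = 0"
    then obtain B where "B ** A = mat 1"
      using matrix_left_invertible_ker by blast
    then have "transpose B ** transpose A = mat 1"
      by (metis matrix_left_right_inverse matrix_transpose_mul transpose_mat)
    then have "\<nu> = transpose B *v (transpose A *v \<nu>)"
      by (simp add: matrix_vector_mul_assoc)
    then show False
      using assms by simp
  qed
  then obtain w where "w \<noteq> 0" and "A *v w = 0"
    by blast
  then show ?thesis
    by (intro exI[of _ "(1 / norm w) *\<^sub>R w"])
      (simp add: dot_square_norm power2_eq_square matrix_vector_mult_scaleR)
qed

text \<open>Completing \<open>A\<close> by \<open>\<nu> u\<^sup>T\<close>, for a unit vector \<open>u\<close> in its kernel, gives an orthogonal matrix.\<close>

lemma tanproj_factorization: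
  fixes A :: "real^'n^'n"
  assumes AA: "A ** transpose A = tanproj \<nu>" and \<nu>: "norm \<nu> = 1"
  shows "\<exists>U. orthogonal_matrix U \<and> A = tanproj \<nu> ** U"
proof -
  have AT\<nu>: "transpose A *v \<nu> = 0"
    by (rule transpose_mult_eq_zero_if_mult_transpose_eq_tanproj[OF AA \<nu>])
  then have \<nu>A: "\<nu> \<bullet> (A *v x) = 0" for x
    using inner_transpose_matrix_vector_mult[of A \<nu> x] by simp
  have "\<nu> \<noteq> 0"
    using \<nu> by auto
  then obtain u where uu: "u \<bullet> u = 1" and Au: "A *v u = 0"
    using exists_unit_kernel_vector[OF AT\<nu>] by blast
  define U where "U = A + outer \<nu> u"
  have U: "U *v y = A *v y + (u \<bullet> y) *\<^sub>R \<nu>" for y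
    by (simp add: U_def matrix_vector_mult_add_rdistrib outer_mult_vector)
  have UT: "transpose U *v x = transpose A *v x + (\<nu> \<bullet> x) *\<^sub>R u" for x
  proof -
    have "transpose U = transpose A + outer u \<nu>"
      by (simp add: U_def transpose_def vec_eq_iff outer_def mult.commute)
    then show ?thesis
      by (simp add: matrix_vector_mult_add_rdistrib outer_mult_vector)
  qed
  have "U ** transpose U = mat 1"
    unfolding matrix_eq
  proof
    fix x
    have "u \<bullet> (transpose A *v x) = 0"
      using inner_transpose_matrix_vector_mult[of A x u] Au by (simp add: inner_commute)
    then have "(U ** transpose U) *v x = A *v (transpose A *v x) + (\<nu> \<bullet> x) *\<^sub>R \<nu>"
      by (simp add: matrix_vector_mul_assoc[symmetric] U UT matrix_vector_right_distrib
          matrix_vector_mult_scaleR Au inner_add_right uu)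
    also have "\<dots> = x"
      using AA by (simp add: matrix_vector_mul_assoc tanproj_mult_vector)
    finally show "(U ** transpose U) *v x = mat 1 *v x" by simp
  qed
  then have "orthogonal_matrix U"
    unfolding orthogonal_matrix_def using matrix_left_right_inverse by blast
  moreover have "tanproj \<nu> ** U = A"
    unfolding matrix_eq
  proof
    fix x
    have "\<nu> \<bullet> \<nu> = 1"
      using \<nu> by (simp add: dot_square_norm)
    then show "(tanproj \<nu> ** U) *v x = A *v x"
      by (simp add: matrix_vector_mul_assoc[symmetric] U matrix_vector_right_distrib
          matrix_vector_mult_scaleR tanproj_mult_self[OF \<nu>] tanproj_mult_vector \<nu>A)
  qed
  ultimately show ?thesis by metis
qed

lemma norm_le_card_of_mult_transpose_tanproj:
  fixes A :: "real^'n^'n"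
  assumes "A ** transpose A = tanproj \<nu>"
  shows "norm A \<le> real CARD('n)"
proof -
  have "(norm (A $ i))\<^sup>2 = (A ** transpose A) $ i $ i" for i
    unfolding power2_norm_vec by (simp add: matrix_matrix_mult_def transpose_def power2_eq_square)
  also have "\<dots> i \<le> 1" for i
    using assms by (simp add: tanproj_def outer_def mat_def)
  finally have "(norm A)\<^sup>2 \<le> real CARD('n)"
    using sum_mono[of UNIV "\<lambda>i. (norm (A $ i))\<^sup>2" "\<lambda>_. 1"] by (simp add: power2_norm_vec[of A])
  also have "\<dots> \<le> (real CARD('n))\<^sup>2"
    by (simp add: power2_eq_square)
  finally show ?thesis
    by (rule power2_le_imp_le) simp
qed

lemma householder_reflection:
  fixes \<nu> e :: "real^'n"
  assumes \<nu>: "norm \<nu> = 1" and e: "norm e = 1"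
  shows "\<exists>W. transpose W = W \<and> W ** W = mat 1 \<and> W *v e = \<nu>"
proof (cases "\<nu> = e")
  case True
  then show ?thesis by (intro exI[of _ "mat 1"]) simp
next
  case False
  define w where "w = \<nu> - e"
  define c where "c = 2 / (w \<bullet> w)"
  have ww: "w \<bullet> w > 0"
    using False by (simp add: w_def)
  have cw: "c * (w \<bullet> w) = 2"
    using ww by (simp add: c_def)
  have "\<nu> \<bullet> \<nu> = 1" "e \<bullet> e = 1"
    using \<nu> e by (simp_all add: dot_square_norm)
  then have we: "w \<bullet> w = - 2 * (w \<bullet> e)"
    by (simp add: w_def inner_diff_left inner_diff_right inner_commute)
  define W where "W = mat 1 - c *\<^sub>R outer w w"
  have W: "W *v x = x - (c * (w \<bullet> x)) *\<^sub>R w" for x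
    by (simp add: W_def matrix_vector_mult_diff_rdistrib scaleR_matrix_vector_assoc[symmetric]
        outer_mult_vector)
  have "transpose W = W"
    by (simp add: W_def transpose_def vec_eq_iff outer_def mat_def mult.commute)
  moreover have "W ** W = mat 1"
    unfolding matrix_eq
  proof
    fix x
    have "w \<bullet> (W *v x) = - (w \<bullet> x)"
      using cw by (simp add: W inner_diff_right algebra_simps)
    then show "(W ** W) *v x = mat 1 *v x"
      by (simp add: matrix_vector_mul_assoc[symmetric] W[of "W *v x"]) (simp add: W)
  qed
  moreover have "W *v e = \<nu>"
  proof -
    have "c * (w \<bullet> e) = -1"
      using cw we ww by (simp add: c_def field_simps)
    then show ?thesis by (simp add: W w_def)
  qed
  ultimately show ?thesis by blast
qed

lemma norm_tanproj_eq_sum_drop_last: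
  fixes \<nu> :: "real^'n::{finite,wellorder}"
  assumes \<nu>: "norm \<nu> = 1"
  shows "\<exists>W. orthogonal_matrix W \<and>
    (\<forall>z. (norm (tanproj \<nu> *v z))\<^sup>2 = (\<Sum>i\<in>UNIV - {Max UNIV}. ((W *v z) $ i)\<^sup>2))"
proof -
  define e where "e = (axis (Max UNIV) 1 :: real^'n::{finite,wellorder})"
  obtain W where W: "transpose W = W" "W ** W = mat 1" "W *v e = \<nu>"
    using householder_reflection[OF \<nu>, of e] by (auto simp: e_def)
  have "(norm (tanproj \<nu> *v z))\<^sup>2 = (\<Sum>i\<in>UNIV - {Max UNIV}. ((W *v z) $ i)\<^sup>2)" for z
  proof -
    have "(W *v z) \<bullet> e = \<nu> \<bullet> z"
      using inner_transpose_matrix_vector_mult[of W z e] W by (simp add: inner_commute)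
    moreover have "(W *v z) \<bullet> (W *v z) = z \<bullet> z"
      using inner_transpose_matrix_vector_mult[of W z "W *v z"] W
      by (simp add: matrix_vector_mul_assoc)
    ultimately have "(norm (tanproj \<nu> *v z))\<^sup>2 = (norm (W *v z))\<^sup>2 - ((W *v z) $ Max UNIV)\<^sup>2"
      using norm_tanproj_mult_sq[OF \<nu>, of z] by (simp add: power2_norm_eq_inner e_def inner_axis)
    also have "\<dots> = (\<Sum>i\<in>UNIV. ((W *v z) $ i)\<^sup>2) - ((W *v z) $ Max UNIV)\<^sup>2"
      by (simp add: power2_norm_vec)
    finally show ?thesis
      by (simp add: sum_diff1)
  qed
  moreover have "orthogonal_matrix W"
    using W by (simp add: orthogonal_matrix)
  ultimately show ?thesis by blast
qed

section \<open>Linearization of the projection onto the sphere\<close>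

lemma inverse_expansion_bound:
  fixes r d \<rho> :: real
  assumes r: "r \<ge> 1/2" and r1: "\<bar>r - 1\<bar> \<le> \<rho>" and rr: "r\<^sup>2 = 1 + 2 * d + \<rho>\<^sup>2"
  shows "\<bar>1/r - 1 + d\<bar> \<le> 3 * \<rho>\<^sup>2"
proof -
  have r1sq: "(r - 1)\<^sup>2 \<le> \<rho>\<^sup>2"
    using r1 by (metis abs_ge_zero power2_abs power_mono)
  have d: "d = (r\<^sup>2 - 1 - \<rho>\<^sup>2) / 2" using rr by simp
  have "1/r - 1 + d = ((r - 1)\<^sup>2 * (r + 2) - r * \<rho>\<^sup>2) / (2 * r)"
    using r unfolding d by (simp add: field_simps power2_eq_square)
  also have "\<bar>\<dots>\<bar> \<le> ((r - 1)\<^sup>2 * (r + 2) + r * \<rho>\<^sup>2) / (2 * r)"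
  proof -
    have "0 \<le> (r - 1)\<^sup>2 * (r + 2)" "0 \<le> r * \<rho>\<^sup>2" using r by auto
    then show ?thesis using r by (simp add: abs_divide divide_right_mono abs_le_iff)
  qed
  also have "\<dots> \<le> (\<rho>\<^sup>2 * (r + 2) + r * \<rho>\<^sup>2) / (2 * r)"
    using r r1sq by (intro divide_right_mono add_right_mono mult_right_mono) auto
  also have "\<dots> = \<rho>\<^sup>2 * (1 + 1 / r)"
    using r by (simp add: field_simps)
  also have "\<dots> \<le> \<rho>\<^sup>2 * 3"
    using r by (intro mult_left_mono) (auto simp: field_simps)
  finally show ?thesis by simp
qed

lemma norm_sph_proj_le: "norm (sph_proj w) \<le> 1"
  by (cases "w = 0") (simp_all add: sph_proj_def)

lemma norm_sph_proj_unit_expansion_near: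
  fixes \<mu> k :: "real^'n"
  assumes \<mu>: "norm \<mu> = 1" and k: "norm k < 1/2"
  shows "norm (sph_proj (\<mu> + k) - \<mu> - tanproj \<mu> *v k) \<le> 5 * (norm k)\<^sup>2"
proof -
  define r where "r = norm (\<mu> + k)"
  define d where "d = \<mu> \<bullet> k"
  have r1: "\<bar>r - 1\<bar> \<le> norm k"
    unfolding r_def using \<mu> norm_triangle_ineq[of \<mu> k] norm_diff_ineq[of \<mu> k] by linarith
  then have r: "r \<ge> 1/2"
    using k by linarith
  have rr: "r\<^sup>2 = 1 + 2 * d + (norm k)\<^sup>2"
  proof -
    have "\<mu> \<bullet> \<mu> = 1" using \<mu> by (simp add: dot_square_norm)
    then show ?thesis unfolding r_def d_def
      by (simp add: power2_norm_eq_inner inner_add_left inner_add_right inner_commute)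
  qed
  have "sph_proj (\<mu> + k) - \<mu> - tanproj \<mu> *v k = (1/r - 1 + d) *\<^sub>R \<mu> + (1/r - 1) *\<^sub>R k"
  proof -
    have "\<And>a. a *\<^sub>R (\<mu> + k) - \<mu> - (k - d *\<^sub>R \<mu>) = (a - 1 + d) *\<^sub>R \<mu> + (a - 1) *\<^sub>R k"
      by (simp add: scaleR_add_right scaleR_diff_left scaleR_add_left)
    then show ?thesis by (simp add: sph_proj_def r_def tanproj_mult_vector d_def)
  qed
  then have "norm (sph_proj (\<mu> + k) - \<mu> - tanproj \<mu> *v k) \<le> \<bar>1/r - 1 + d\<bar> + \<bar>1/r - 1\<bar> * norm k"
    using \<mu> norm_triangle_ineq[of "(1/r - 1 + d) *\<^sub>R \<mu>" "(1/r - 1) *\<^sub>R k"] by simp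
  moreover have "\<bar>1/r - 1\<bar> * norm k \<le> 2 * (norm k)\<^sup>2"
  proof -
    have "\<bar>1/r - 1\<bar> = \<bar>r - 1\<bar> / r" using r by (simp add: field_simps abs_minus_commute)
    also have "\<dots> \<le> norm k / (1/2)" using r r1 by (intro frac_le) auto
    finally have "\<bar>1/r - 1\<bar> * norm k \<le> (2 * norm k) * norm k"
      by (intro mult_right_mono) simp_all
    then show ?thesis by (simp add: power2_eq_square)
  qed
  moreover note inverse_expansion_bound[OF r r1 rr]
  ultimately show ?thesis by linarith
qed

lemma norm_sph_proj_unit_expansion:
  fixes \<mu> k :: "real^'n"
  assumes \<mu>: "norm \<mu> = 1"
  shows "norm (sph_proj (\<mu> + k) - \<mu> - tanproj \<mu> *v k) \<le> 10 * (norm k)\<^sup>2"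
proof (cases "norm k < 1/2")
  case True
  then show ?thesis
    using norm_sph_proj_unit_expansion_near[OF \<mu> True] zero_le_power2[of "norm k"] by linarith
next
  case False
  have "norm (sph_proj (\<mu> + k) - \<mu> - tanproj \<mu> *v k)
      \<le> norm (sph_proj (\<mu> + k)) + norm \<mu> + norm (tanproj \<mu> *v k)"
    by (smt (verit) norm_triangle_ineq4)
  also have "\<dots> \<le> 2 + norm k"
    using norm_sph_proj_le[of "\<mu> + k"] norm_tanproj_mult_le[OF \<mu>, of k] \<mu> by linarith
  also have "\<dots> \<le> 10 * (norm k)\<^sup>2"
  proof -
    have "norm k * (1/2) \<le> norm k * norm k" using False by (intro mult_left_mono) auto
    then show ?thesis using False by (simp add: power2_eq_square)
  qed
  finally show ?thesis .
qed

lemma norm_sph_proj_expansion: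
  fixes t h :: "real^'n"
  assumes t: "t \<noteq> 0"
  shows "norm (sph_proj (t + h) - sph_proj t - (1 / norm t) *\<^sub>R (tanproj (sph_proj t) *v h))
    \<le> 10 * (norm h)\<^sup>2 / (norm t)\<^sup>2"
proof -
  define a where "a = norm t"
  define \<mu> where "\<mu> = sph_proj t"
  have a: "a > 0" using t by (simp add: a_def)
  have \<mu>: "norm \<mu> = 1" using t by (simp add: \<mu>_def sph_proj_def)
  have "t + h = a *\<^sub>R (\<mu> + (1/a) *\<^sub>R h)"
    using a by (simp add: a_def \<mu>_def sph_proj_def scaleR_add_right)
  then have "sph_proj (t + h) = sph_proj (\<mu> + (1/a) *\<^sub>R h)"
    using a by (simp add: sph_proj_def)
  then have "norm (sph_proj (t + h) - sph_proj t - (1 / norm t) *\<^sub>R (tanproj (sph_proj t) *v h))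
      = norm (sph_proj (\<mu> + (1/a) *\<^sub>R h) - \<mu> - tanproj \<mu> *v ((1/a) *\<^sub>R h))"
    by (simp add: \<mu>_def a_def matrix_vector_mult_scaleR)
  also have "\<dots> \<le> 10 * (norm ((1/a) *\<^sub>R h))\<^sup>2"
    by (rule norm_sph_proj_unit_expansion[OF \<mu>])
  also have "\<dots> = 10 * (norm h)\<^sup>2 / (norm t)\<^sup>2"
    using a by (simp add: a_def power_divide power_mult_distrib)
  finally show ?thesis .
qed

lemma sph_proj_linearization_bound:
  fixes t :: "real^'n" and z :: "real^'m" and B :: "real^'m^'n" and \<Gamma> :: "real^'n^'k"
  defines "\<mu> \<equiv> sph_proj t"
  assumes t: "t \<noteq> 0" and e: "\<bar>e\<bar> \<le> c * norm t"
  shows "norm (\<Gamma> *v ((norm t *\<^sub>R tanproj \<mu> + e *\<^sub>R (mat 1 - tanproj \<mu>)) *v (sph_proj (t + B *v z) - \<mu>))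
      - (\<Gamma> ** tanproj \<mu> ** B) *v z)
    \<le> 10 * (1 + c) * (opnorm \<Gamma> * (opnorm B)\<^sup>2 / norm t) * (norm z)\<^sup>2"
proof -
  define a where "a = norm t"
  define h where "h = B *v z"
  define G where "G = a *\<^sub>R tanproj \<mu> + e *\<^sub>R (mat 1 - tanproj \<mu>)"
  define D where "D = sph_proj (t + h) - \<mu> - (1/a) *\<^sub>R (tanproj \<mu> *v h)"
  have a: "0 < a" and \<mu>: "norm \<mu> = 1"
    using t by (simp_all add: a_def \<mu>_def sph_proj_def)
  have D: "norm D \<le> 10 * (norm h)\<^sup>2 / a\<^sup>2"
    using norm_sph_proj_expansion[OF t, of h] by (simp add: D_def a_def \<mu>_def)
  have GD: "G *v (sph_proj (t + h) - \<mu>) = G *v D + tanproj \<mu> *v h"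
    using tanproj_blend_mult_tanproj[OF \<mu>, of a e] a
    by (simp add: D_def G_def matrix_vector_mult_diff_distrib matrix_vector_mult_scaleR
        matrix_vector_right_distrib)
  have "(\<Gamma> ** tanproj \<mu> ** B) *v z = \<Gamma> *v (tanproj \<mu> *v h)"
    by (simp add: h_def matrix_vector_mul_assoc matrix_mul_assoc)
  then have "\<Gamma> *v (G *v (sph_proj (t + h) - \<mu>)) - (\<Gamma> ** tanproj \<mu> ** B) *v z = \<Gamma> *v (G *v D)"
    by (simp only: GD matrix_vector_right_distrib add_diff_cancel_right')
  moreover have "norm (\<Gamma> *v (G *v D)) \<le> 10 * (1 + c) * (opnorm \<Gamma> * (opnorm B)\<^sup>2 / a) * (norm z)\<^sup>2"
  proof -
    have "0 \<le> c * a"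
      using e abs_ge_zero[of e] unfolding a_def by linarith
    then have c: "0 \<le> 1 + c"
      using a by (simp add: zero_le_mult_iff)
    have "norm (G *v D) \<le> (\<bar>a\<bar> + \<bar>e\<bar>) * norm D"
      unfolding G_def by (rule norm_tanproj_blend_mult_le[OF \<mu>])
    also have "\<dots> \<le> (1 + c) * a * norm D"
      using e a by (intro mult_right_mono) (simp_all add: a_def algebra_simps)
    also have "\<dots> \<le> (1 + c) * a * (10 * (opnorm B * norm z)\<^sup>2 / a\<^sup>2)"
    proof -
      have "(norm h)\<^sup>2 \<le> (opnorm B * norm z)\<^sup>2"
        by (intro power_mono) (simp_all add: h_def norm_matrix_vector_mult_le_opnorm)
      then have "norm D \<le> 10 * (opnorm B * norm z)\<^sup>2 / a\<^sup>2"
        using D by (meson divide_right_mono mult_left_mono order_trans zero_le_numeral zero_le_power2)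
      then show ?thesis
        using a c by (intro mult_left_mono) simp_all
    qed
    finally have "norm (\<Gamma> *v (G *v D)) \<le> opnorm \<Gamma> * ((1 + c) * a * (10 * (opnorm B * norm z)\<^sup>2 / a\<^sup>2))"
      using norm_matrix_vector_mult_le_opnorm[of \<Gamma> "G *v D"] opnorm_nonneg[of \<Gamma>]
      by (meson mult_left_mono order_trans)
    also have "\<dots> = 10 * (1 + c) * (opnorm \<Gamma> * (opnorm B)\<^sup>2 / a) * (norm z)\<^sup>2"
      using a by (simp add: field_simps power2_eq_square)
    finally show ?thesis .
  qed
  ultimately show ?thesis
    by (simp add: G_def a_def h_def)
qed

lemma borel_measurable_sph_proj [measurable]: "sph_proj \<in> borel_measurable borel"
  unfolding sph_proj_def by measurable

section \<open>Convergence in distribution and in probability\<close>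

lemma LIMSEQ_of_subsubseq:
  fixes x :: "nat \<Rightarrow> 'a::metric_space"
  assumes sub: "\<And>r :: nat \<Rightarrow> nat. strict_mono r \<Longrightarrow> \<exists>s :: nat \<Rightarrow> nat. strict_mono s \<and> (\<lambda>n. x (r (s n))) \<longlonglongrightarrow> c"
  shows "x \<longlonglongrightarrow> c"
proof (rule ccontr)
  assume "\<not> x \<longlonglongrightarrow> c"
  then obtain \<epsilon> where "\<epsilon> > 0" and "infinite {n. \<not> dist (x n) c < \<epsilon>}"
    by (auto simp: tendsto_iff not_eventually INFM_iff_infinite cofinite_eq_sequentially[symmetric])
  then obtain r :: "nat \<Rightarrow> nat" where r: "\<And>n. \<not> dist (x (r n)) c < \<epsilon>" and "strict_mono r"
    using enumerate_in_set enumerate_mono by (fastforce simp: strict_mono_def)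
  moreover obtain s where "(\<lambda>n. x (r (s n))) \<longlonglongrightarrow> c"
    using sub[OF \<open>strict_mono r\<close>] by blast
  ultimately show False
    using \<open>\<epsilon> > 0\<close> by (auto dest: tendstoD)
qed

lemma conv_distr_subseq:
  "conv_distr M X L \<Longrightarrow> strict_mono r \<Longrightarrow> conv_distr (\<lambda>n. M (r n)) (\<lambda>n. X (r n)) L"
  using LIMSEQ_subseq_LIMSEQ unfolding conv_distr_def o_def by blast

lemma conv_prob_zero_subseq:
  "conv_prob_zero M X \<Longrightarrow> strict_mono r \<Longrightarrow> conv_prob_zero (\<lambda>n. M (r n)) (\<lambda>n. X (r n))"
  using LIMSEQ_subseq_LIMSEQ unfolding conv_prob_zero_def o_def by blast

lemma conv_distr_of_subsubseq:
  fixes X :: "nat \<Rightarrow> 'a \<Rightarrow> 'b::topological_space"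
  assumes "\<And>r :: nat \<Rightarrow> nat. strict_mono r \<Longrightarrow>
    \<exists>s :: nat \<Rightarrow> nat. strict_mono s \<and> conv_distr (\<lambda>n. M (r (s n))) (\<lambda>n. X (r (s n))) L"
  shows "conv_distr M X L"
  unfolding conv_distr_def
proof (intro allI impI)
  fix f :: "'b \<Rightarrow> real" assume "continuous_on UNIV f \<and> bounded (range f)"
  then show "(\<lambda>n. \<integral>\<omega>. f (X n \<omega>) \<partial>M n) \<longlonglongrightarrow> (\<integral>x. f x \<partial>L)"
    using assms unfolding conv_distr_def by (intro LIMSEQ_of_subsubseq) blast
qed

lemma conv_distr_continuous_map:
  fixes g :: "'b::topological_space \<Rightarrow> 'c::topological_space"
  assumes L: "sets L = sets borel" and conv: "conv_distr M X L" and g: "continuous_on UNIV g"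
  shows "conv_distr M (\<lambda>n \<omega>. g (X n \<omega>)) (distr L borel g)"
  unfolding conv_distr_def
proof (intro allI impI)
  fix f :: "'c \<Rightarrow> real" assume "continuous_on UNIV f \<and> bounded (range f)"
  then have fc: "continuous_on UNIV f" and fb: "bounded (range f)" by blast+
  have "continuous_on UNIV (\<lambda>x. f (g x))"
    using continuous_on_compose2[OF fc g] by blast
  moreover have "bounded (range (\<lambda>x. f (g x)))"
    using fb by (rule bounded_subset) blast
  ultimately have "(\<lambda>n. \<integral>\<omega>. f (g (X n \<omega>)) \<partial>M n) \<longlonglongrightarrow> (\<integral>x. f (g x) \<partial>L)"
    using conv[unfolded conv_distr_def, rule_format, of "\<lambda>x. f (g x)"] by blast
  moreover have "(\<integral>x. f x \<partial>distr L borel g) = (\<integral>x. f (g x) \<partial>L)"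
  proof (rule integral_distr)
    show "g \<in> L \<rightarrow>\<^sub>M borel"
      unfolding measurable_cong_sets[OF L refl] by (rule borel_measurable_continuous_onI[OF g])
  qed (rule borel_measurable_continuous_onI[OF fc])
  ultimately show "(\<lambda>n. \<integral>\<omega>. f (g (X n \<omega>)) \<partial>M n) \<longlonglongrightarrow> (\<integral>x. f x \<partial>distr L borel g)"
    by simp
qed

lemma (in finite_measure) integral_mono_of_bounded:
  fixes f g :: "'a \<Rightarrow> real"
  assumes "f \<in> borel_measurable M" "g \<in> borel_measurable M"
    and "\<And>x. x \<in> space M \<Longrightarrow> \<bar>f x\<bar> \<le> C" "\<And>x. x \<in> space M \<Longrightarrow> \<bar>g x\<bar> \<le> C"
    and "\<And>x. x \<in> space M \<Longrightarrow> f x \<le> g x"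
  shows "integral\<^sup>L M f \<le> integral\<^sup>L M g"
  using assms by (intro integral_mono integrable_const_bound[where B=C]) auto

lemma (in prob_space) abs_integral_le_off_event:
  fixes G :: "'a \<Rightarrow> real"
  assumes G: "G \<in> borel_measurable M" and B: "B \<in> events" and \<epsilon>: "0 \<le> \<epsilon>"
    and bound: "\<And>x. x \<in> space M \<Longrightarrow> \<bar>G x\<bar> \<le> C"
    and small: "\<And>x. x \<in> space M - B \<Longrightarrow> \<bar>G x\<bar> \<le> \<epsilon>"
  shows "\<bar>integral\<^sup>L M G\<bar> \<le> \<epsilon> + C * prob B"
proof -
  obtain x where "x \<in> space M" using not_empty by blast
  then have C: "0 \<le> C" using bound[of x] by linarith
  have "\<bar>integral\<^sup>L M G\<bar> \<le> (\<integral>x. \<bar>G x\<bar> \<partial>M)"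
    by (rule integral_abs_bound)
  also have "\<dots> \<le> (\<integral>x. \<epsilon> + C * indicator B x \<partial>M)"
  proof (rule integral_mono)
    show "integrable M (\<lambda>x. \<bar>G x\<bar>)"
      using G bound by (intro integrable_const_bound[where B=C]) auto
    show "integrable M (\<lambda>x. \<epsilon> + C * indicator B x)"
      using B \<epsilon> C by (intro integrable_const_bound[where B="\<epsilon> + C"]) (auto simp: indicator_def)
    show "\<bar>G x\<bar> \<le> \<epsilon> + C * indicator B x" if "x \<in> space M" for x
      using that bound[of x] small[of x] \<epsilon> by (cases "x \<in> B") auto
  qed
  also have "\<dots> = (\<integral>x. \<epsilon> \<partial>M) + (\<integral>x. C * indicator B x \<partial>M)"
    using B by (intro Bochner_Integration.integral_add) (auto simp: emeasure_eq_measure)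
  also have "\<dots> = \<epsilon> + C * prob B"
    using B by (simp add: prob_space sets.Int_space_eq2)
  finally show ?thesis .
qed

lemma measure_norm_tail_less:
  fixes L :: "'b::real_normed_vector measure"
  assumes L: "prob_space L" "sets L = sets borel" and e: "0 < e"
  shows "\<exists>K::nat. measure L {z. real K < norm z} < e"
proof -
  interpret prob_space L by fact
  define A where "A k = {z::'b. real k < norm z}" for k
  have "A k \<in> sets borel" for k
    unfolding A_def by (intro borel_open open_Collect_less continuous_intros)
  then have A_sets: "range A \<subseteq> sets L"
    using L(2) by blast
  have "decseq A"
    by (auto simp: decseq_def A_def)
  moreover have "(\<Inter>k. A k) = {}"
    by (auto simp: A_def) (meson not_le real_arch_simple)
  ultimately have "(\<lambda>k. measure L (A k)) \<longlonglongrightarrow> 0"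
    using finite_Lim_measure_decseq[OF A_sets] by simp
  then have "eventually (\<lambda>k. measure L (A k) < e) sequentially"
    using e by (intro order_tendstoD(2)) auto
  then show ?thesis
    by (auto simp: eventually_sequentially A_def)
qed

lemma conv_distr_tight:
  fixes X :: "nat \<Rightarrow> 'a \<Rightarrow> 'b::real_normed_vector"
  assumes M: "\<And>n. prob_space (M n)" and X: "\<And>n. X n \<in> borel_measurable (M n)"
    and L: "prob_space L" "sets L = sets borel" and conv: "conv_distr M X L" and e: "0 < e"
  shows "\<exists>K. eventually (\<lambda>n. measure (M n) {\<omega> \<in> space (M n). K < norm (X n \<omega>)} < e) sequentially"
proof -
  interpret L: prob_space L by fact
  obtain K :: nat where K: "measure L {z. real K < norm z} < e/2"
    using measure_norm_tail_less[OF L, of "e/2"] e by auto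
  define f where "f z = min 1 (max 0 (norm z - real K))" for z :: 'b
  have fc: "continuous_on UNIV f"
    unfolding f_def by (intro continuous_intros)
  have f_bound: "\<bar>f z\<bar> \<le> 1" for z
    by (simp add: f_def)
  have fm: "f \<in> borel_measurable borel"
    using fc by (rule borel_measurable_continuous_onI)
  have "bounded (range f)"
    using f_bound by (auto simp: bounded_iff)
  then have lim: "(\<lambda>n. \<integral>\<omega>. f (X n \<omega>) \<partial>M n) \<longlonglongrightarrow> (\<integral>z. f z \<partial>L)"
    using conv[unfolded conv_distr_def, rule_format, OF conjI[OF fc]] by blast
  have tail: "{z. real K < norm z} \<in> sets L"
    unfolding L(2) by (intro borel_open open_Collect_less continuous_intros)
  have "(\<integral>z. f z \<partial>L) \<le> (\<integral>z. indicator {z. real K < norm z} z \<partial>L)"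
    using tail fm L(2) f_bound
    by (intro L.integral_mono_of_bounded[where C=1])
       (auto simp: measurable_cong_sets[OF L(2) refl] f_def indicator_def)
  then have "eventually (\<lambda>n. (\<integral>\<omega>. f (X n \<omega>) \<partial>M n) < e) sequentially"
    using K tail e by (intro order_tendstoD(2)[OF lim]) auto
  moreover have "measure (M n) {\<omega> \<in> space (M n). real K + 1 < norm (X n \<omega>)} \<le> (\<integral>\<omega>. f (X n \<omega>) \<partial>M n)"
    for n
  proof -
    interpret prob_space "M n" by (rule M)
    have [measurable]: "X n \<in> borel_measurable (M n)" by (rule X)
    have "measure (M n) {\<omega> \<in> space (M n). real K + 1 < norm (X n \<omega>)}
        = (\<integral>\<omega>. indicator {\<omega> \<in> space (M n). real K + 1 < norm (X n \<omega>)} \<omega> \<partial>M n)"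
      by (simp add: Int_absorb2)
    also have "\<dots> \<le> (\<integral>\<omega>. f (X n \<omega>) \<partial>M n)"
      using f_bound by (intro integral_mono_of_bounded[where C=1]) (auto simp: f_def indicator_def)
    finally show ?thesis .
  qed
  ultimately show ?thesis
    by (intro exI[of _ "real K + 1"]) (auto elim!: eventually_mono intro: order.strict_trans1)
qed

lemma conv_prob_zero_of_bound:
  fixes Z :: "nat \<Rightarrow> 'a \<Rightarrow> 'b::real_normed_vector" and R :: "nat \<Rightarrow> 'a \<Rightarrow> 'c::real_normed_vector"
  assumes M: "\<And>n. prob_space (M n)" and Z: "\<And>n. Z n \<in> borel_measurable (M n)"
    and L: "prob_space L" "sets L = sets borel" and conv: "conv_distr M Z L"
    and \<kappa>: "\<kappa> \<longlonglongrightarrow> 0"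
    and bound: "eventually (\<lambda>n. \<forall>\<omega>\<in>space (M n). norm (R n \<omega>) \<le> \<kappa> n * norm (Z n \<omega>) ^ k) sequentially"
  shows "conv_prob_zero M R"
  unfolding conv_prob_zero_def
proof (intro allI impI)
  fix e :: real assume e: "0 < e"
  show "(\<lambda>n. measure (M n) {\<omega> \<in> space (M n). e < norm (R n \<omega>)}) \<longlonglongrightarrow> 0"
  proof (rule tendstoI)
    fix \<epsilon> :: real assume "0 < \<epsilon>"
    then obtain K where K: "eventually (\<lambda>n. measure (M n) {\<omega> \<in> space (M n). K < norm (Z n \<omega>)} < \<epsilon>) sequentially"
      using conv_distr_tight[OF M Z L conv] by blast
    define K' where "K' = max K 0"
    have "(\<lambda>n. \<bar>\<kappa> n\<bar> * K' ^ k) \<longlonglongrightarrow> 0 * K' ^ k"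
      using \<kappa> by (intro tendsto_intros) (simp add: tendsto_rabs_zero)
    then have small: "eventually (\<lambda>n. \<bar>\<kappa> n\<bar> * K' ^ k < e) sequentially"
      using e by (intro order_tendstoD(2)) auto
    show "eventually (\<lambda>n. dist (measure (M n) {\<omega> \<in> space (M n). e < norm (R n \<omega>)}) 0 < \<epsilon>) sequentially"
      using K small bound
    proof eventually_elim
      case (elim n)
      interpret prob_space "M n" by (rule M)
      have [measurable]: "Z n \<in> borel_measurable (M n)" by (rule Z)
      have "K < norm (Z n \<omega>)" if "\<omega> \<in> space (M n)" "e < norm (R n \<omega>)" for \<omega>
      proof (rule ccontr)
        assume "\<not> K < norm (Z n \<omega>)"
        then have "norm (Z n \<omega>) ^ k \<le> K' ^ k"
          by (intro power_mono) (auto simp: K'_def)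
        then have "\<kappa> n * norm (Z n \<omega>) ^ k \<le> \<bar>\<kappa> n\<bar> * K' ^ k"
          by (meson abs_ge_self abs_ge_zero mult_left_mono mult_right_mono order_trans zero_le_power norm_ge_zero)
        then show False
          using elim that by fastforce
      qed
      then have "{\<omega> \<in> space (M n). e < norm (R n \<omega>)} \<subseteq> {\<omega> \<in> space (M n). K < norm (Z n \<omega>)}"
        by auto
      then have "measure (M n) {\<omega> \<in> space (M n). e < norm (R n \<omega>)}
          \<le> measure (M n) {\<omega> \<in> space (M n). K < norm (Z n \<omega>)}"
        by (intro finite_measure_mono) measurable
      then show ?case
        using elim by simp
    qed
  qed
qed

lemma conv_prob_zero_add:
  fixes R S :: "nat \<Rightarrow> 'a \<Rightarrow> 'b::real_normed_vector"
  assumes M: "\<And>n. prob_space (M n)"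
    and R: "\<And>n. R n \<in> borel_measurable (M n)" and S: "\<And>n. S n \<in> borel_measurable (M n)"
    and "conv_prob_zero M R" "conv_prob_zero M S"
  shows "conv_prob_zero M (\<lambda>n \<omega>. R n \<omega> + S n \<omega>)"
  unfolding conv_prob_zero_def
proof (intro allI impI)
  fix e :: real assume e: "0 < e"
  let ?P = "\<lambda>n X c. measure (M n) {\<omega> \<in> space (M n). c < norm (X \<omega>)}"
  have lim: "(\<lambda>n. ?P n (R n) (e/2) + ?P n (S n) (e/2)) \<longlonglongrightarrow> 0 + 0"
    using assms(4,5)[unfolded conv_prob_zero_def, rule_format, OF half_gt_zero[OF e]]
    by (rule tendsto_add)
  have le: "?P n (\<lambda>\<omega>. R n \<omega> + S n \<omega>) e \<le> ?P n (R n) (e/2) + ?P n (S n) (e/2)" for n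
  proof -
    interpret prob_space "M n" by (rule M)
    have [measurable]: "R n \<in> borel_measurable (M n)" "S n \<in> borel_measurable (M n)"
      by (rule R, rule S)
    have "e/2 < norm (R n \<omega>) \<or> e/2 < norm (S n \<omega>)" if "e < norm (R n \<omega> + S n \<omega>)" for \<omega>
      using that norm_triangle_ineq[of "R n \<omega>" "S n \<omega>"] by linarith
    then have "?P n (\<lambda>\<omega>. R n \<omega> + S n \<omega>) e
        \<le> measure (M n) ({\<omega> \<in> space (M n). e/2 < norm (R n \<omega>)} \<union> {\<omega> \<in> space (M n). e/2 < norm (S n \<omega>)})"
      by (intro finite_measure_mono) auto
    also have "\<dots> \<le> ?P n (R n) (e/2) + ?P n (S n) (e/2)"
      by (intro measure_subadditive) auto
    finally show ?thesis .
  qed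
  show "(\<lambda>n. ?P n (\<lambda>\<omega>. R n \<omega> + S n \<omega>) e) \<longlonglongrightarrow> 0"
    by (rule real_tendsto_sandwich[where f="\<lambda>_. 0" and h="\<lambda>n. ?P n (R n) (e/2) + ?P n (S n) (e/2)"])
       (use lim le in simp_all)
qed

lemma continuous_on_uniformly_near_bounded:
  fixes f :: "'b::euclidean_space \<Rightarrow> 'c::metric_space"
  assumes f: "continuous_on UNIV f" and \<epsilon>: "0 < \<epsilon>"
  shows "\<exists>\<eta>>0. \<forall>x y. norm x \<le> K \<longrightarrow> norm (y - x) \<le> \<eta> \<longrightarrow> dist (f y) (f x) < \<epsilon>"
proof -
  define \<rho> where "\<rho> = \<bar>K\<bar> + 1"
  have "uniformly_continuous_on (cball 0 \<rho>) f"
    using f by (intro compact_uniformly_continuous) (auto intro: continuous_on_subset)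
  then obtain \<delta> where \<delta>: "0 < \<delta>"
    and f_close: "\<And>x y. x \<in> cball 0 \<rho> \<Longrightarrow> y \<in> cball 0 \<rho> \<Longrightarrow> dist y x < \<delta> \<Longrightarrow> dist (f y) (f x) < \<epsilon>"
    using \<epsilon> unfolding uniformly_continuous_on_def by metis
  have "dist (f y) (f x) < \<epsilon>" if "norm x \<le> K" "norm (y - x) \<le> min \<delta> 1 / 2" for x y
    using that \<delta> norm_triangle_ineq[of x "y - x"]
    by (intro f_close) (auto simp: \<rho>_def dist_norm)
  moreover have "0 < min \<delta> 1 / 2"
    using \<delta> by simp
  ultimately show ?thesis
    by blast
qed

lemma (in prob_space) abs_integral_diff_le:
  fixes X Y :: "'a \<Rightarrow> 'b::euclidean_space" and f :: "'b \<Rightarrow> real"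
  assumes [measurable]: "X \<in> borel_measurable M" "Y \<in> borel_measurable M" "f \<in> borel_measurable borel"
    and C: "\<And>x. \<bar>f x\<bar> \<le> C" and \<epsilon>: "0 \<le> \<epsilon>"
    and close: "\<And>x y. norm x \<le> K \<Longrightarrow> norm (y - x) \<le> \<eta> \<Longrightarrow> \<bar>f y - f x\<bar> \<le> \<epsilon>"
  shows "\<bar>(\<integral>\<omega>. f (Y \<omega>) \<partial>M) - (\<integral>\<omega>. f (X \<omega>) \<partial>M)\<bar>
    \<le> \<epsilon> + 2 * C * (prob {\<omega> \<in> space M. K < norm (X \<omega>)} + prob {\<omega> \<in> space M. \<eta> < norm (Y \<omega> - X \<omega>)})"
proof -
  define B1 where "B1 = {\<omega> \<in> space M. K < norm (X \<omega>)}"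
  define B2 where "B2 = {\<omega> \<in> space M. \<eta> < norm (Y \<omega> - X \<omega>)}"
  have [measurable]: "B1 \<in> events" "B2 \<in> events"
    unfolding B1_def B2_def by measurable
  have "C \<ge> 0"
    using C[of 0] by linarith
  have "(\<integral>\<omega>. f (Y \<omega>) \<partial>M) - (\<integral>\<omega>. f (X \<omega>) \<partial>M) = (\<integral>\<omega>. f (Y \<omega>) - f (X \<omega>) \<partial>M)"
    using C by (intro Bochner_Integration.integral_diff[symmetric] integrable_const_bound[where B=C]) auto
  also have "\<bar>\<dots>\<bar> \<le> \<epsilon> + 2 * C * prob (B1 \<union> B2)"
  proof (rule abs_integral_le_off_event)
    show "\<bar>f (Y \<omega>) - f (X \<omega>)\<bar> \<le> 2 * C" for \<omega>
      using C[of "Y \<omega>"] C[of "X \<omega>"] by linarith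
    show "\<bar>f (Y \<omega>) - f (X \<omega>)\<bar> \<le> \<epsilon>" if "\<omega> \<in> space M - (B1 \<union> B2)" for \<omega>
      using that by (intro close) (auto simp: B1_def B2_def)
  qed (use \<epsilon> in auto)
  also have "\<dots> \<le> \<epsilon> + 2 * C * (prob B1 + prob B2)"
    using \<open>C \<ge> 0\<close> by (intro add_left_mono mult_left_mono measure_subadditive) (auto simp: emeasure_eq_measure)
  finally show ?thesis
    by (simp add: B1_def B2_def)
qed

lemma conv_distr_perturb:
  fixes X Y :: "nat \<Rightarrow> 'a \<Rightarrow> 'b::euclidean_space"
  assumes M: "\<And>n. prob_space (M n)"
    and X: "\<And>n. X n \<in> borel_measurable (M n)" and Y: "\<And>n. Y n \<in> borel_measurable (M n)"
    and L: "prob_space L" "sets L = sets borel" and conv: "conv_distr M X L"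
    and close: "conv_prob_zero M (\<lambda>n \<omega>. Y n \<omega> - X n \<omega>)"
  shows "conv_distr M Y L"
  unfolding conv_distr_def
proof (intro allI impI)
  fix f :: "'b \<Rightarrow> real" assume f: "continuous_on UNIV f \<and> bounded (range f)"
  obtain C where C: "\<And>x. \<bar>f x\<bar> \<le> C"
    using f by (auto simp: bounded_iff)
  have "0 \<le> C" using C[of 0] by linarith
  have "(\<lambda>n. (\<integral>\<omega>. f (Y n \<omega>) \<partial>M n) - (\<integral>\<omega>. f (X n \<omega>) \<partial>M n)) \<longlonglongrightarrow> 0"
  proof (rule tendstoI)
    fix e :: real assume e: "0 < e"
    define \<epsilon> where "\<epsilon> = e / (2 + 8 * C)"
    have \<epsilon>: "0 < \<epsilon>" and "\<epsilon> * (2 + 8 * C) = e"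
      using e \<open>0 \<le> C\<close> by (simp_all add: \<epsilon>_def)
    moreover have "\<epsilon> + 2 * C * (2 * \<epsilon>) = \<epsilon> * (2 + 8 * C) / 2"
      by (simp add: algebra_simps)
    ultimately have "\<epsilon> + 2 * C * (2 * \<epsilon>) = e / 2"
      by simp
    then have \<epsilon>e: "\<epsilon> + 2 * C * (2 * \<epsilon>) < e"
      using e by linarith
    obtain K where K: "eventually (\<lambda>n. measure (M n) {\<omega> \<in> space (M n). K < norm (X n \<omega>)} < \<epsilon>) sequentially"
      using conv_distr_tight[OF M X L conv \<epsilon>] by blast
    obtain \<eta> where \<eta>: "0 < \<eta>"
      and f_close: "\<And>x y. norm x \<le> K \<Longrightarrow> norm (y - x) \<le> \<eta> \<Longrightarrow> dist (f y) (f x) < \<epsilon>"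
      using continuous_on_uniformly_near_bounded[of f \<epsilon> K] f \<epsilon> by blast
    have YX: "eventually (\<lambda>n. measure (M n) {\<omega> \<in> space (M n). \<eta> < norm (Y n \<omega> - X n \<omega>)} < \<epsilon>) sequentially"
      using order_tendstoD(2)[OF close[unfolded conv_prob_zero_def, rule_format, OF \<eta>] \<epsilon>] .
    show "eventually (\<lambda>n. dist ((\<integral>\<omega>. f (Y n \<omega>) \<partial>M n) - (\<integral>\<omega>. f (X n \<omega>) \<partial>M n)) 0 < e) sequentially"
      using K YX
    proof eventually_elim
      case (elim n)
      interpret prob_space "M n" by (rule M)
      have "\<bar>(\<integral>\<omega>. f (Y n \<omega>) \<partial>M n) - (\<integral>\<omega>. f (X n \<omega>) \<partial>M n)\<bar>
          \<le> \<epsilon> + 2 * C * (prob {\<omega> \<in> space (M n). K < norm (X n \<omega>)}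
                           + prob {\<omega> \<in> space (M n). \<eta> < norm (Y n \<omega> - X n \<omega>)})"
        using X Y f C \<epsilon> f_close
        by (intro abs_integral_diff_le) (auto simp: borel_measurable_continuous_onI dist_real_def less_imp_le)
      also have "\<dots> \<le> \<epsilon> + 2 * C * (2 * \<epsilon>)"
        using elim \<open>0 \<le> C\<close> by (intro add_left_mono mult_left_mono) auto
      finally show ?case
        using \<epsilon>e by (simp add: dist_real_def)
    qed
  qed
  then have "(\<lambda>n. ((\<integral>\<omega>. f (Y n \<omega>) \<partial>M n) - (\<integral>\<omega>. f (X n \<omega>) \<partial>M n)) + (\<integral>\<omega>. f (X n \<omega>) \<partial>M n))
      \<longlonglongrightarrow> 0 + (\<integral>x. f x \<partial>L)"
    using conv f unfolding conv_distr_def by (intro tendsto_add) auto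
  then show "(\<lambda>n. \<integral>\<omega>. f (Y n \<omega>) \<partial>M n) \<longlonglongrightarrow> (\<integral>x. f x \<partial>L)"
    by simp
qed

lemma borel_measurable_matrix_vector_mult [measurable (raw)]:
  "X \<in> borel_measurable M \<Longrightarrow> (\<lambda>\<omega>. (A::real^'n^'m) *v X \<omega>) \<in> borel_measurable M"
  by (erule measurable_compose) (intro borel_measurable_continuous_onI continuous_intros)

lemma conv_distr_affine:
  fixes X :: "nat \<Rightarrow> 'a \<Rightarrow> real^'n" and R :: "nat \<Rightarrow> 'a \<Rightarrow> real^'m" and A :: "nat \<Rightarrow> real^'n^'m"
  assumes M: "\<And>n. prob_space (M n)"
    and X: "\<And>n. X n \<in> borel_measurable (M n)" and R: "\<And>n. R n \<in> borel_measurable (M n)"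
    and L: "prob_space L" "sets L = sets borel" and conv: "conv_distr M X L"
    and R0: "conv_prob_zero M R" and A: "A \<longlonglongrightarrow> A0"
  shows "conv_distr M (\<lambda>n \<omega>. A n *v X n \<omega> + R n \<omega>) (distr L borel (\<lambda>z. A0 *v z))"
proof (rule conv_distr_perturb[where X="\<lambda>n \<omega>. A0 *v X n \<omega>"])
  have cont: "continuous_on UNIV (\<lambda>z. A0 *v z)"
    by (intro continuous_intros)
  then show "conv_distr M (\<lambda>n \<omega>. A0 *v X n \<omega>) (distr L borel (\<lambda>z. A0 *v z))"
    by (rule conv_distr_continuous_map[OF L(2) conv])
  show "prob_space (distr L borel (\<lambda>z. A0 *v z))"
  proof (rule prob_space.prob_space_distr[OF L(1)])
    show "(\<lambda>z. A0 *v z) \<in> L \<rightarrow>\<^sub>M borel"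
      unfolding measurable_cong_sets[OF L(2) refl] by (rule borel_measurable_continuous_onI[OF cont])
  qed
  have "conv_prob_zero M (\<lambda>n \<omega>. (A n - A0) *v X n \<omega> + R n \<omega>)"
  proof (rule conv_prob_zero_add[OF M _ R _ R0])
    have "(\<lambda>n. norm (A n - A0)) \<longlonglongrightarrow> 0"
      using A by (simp add: tendsto_norm_zero_iff LIM_zero_iff)
    then show "conv_prob_zero M (\<lambda>n \<omega>. (A n - A0) *v X n \<omega>)"
      by (rule conv_prob_zero_of_bound[OF M X L conv, where k=1]) (simp add: norm_matrix_vector_mult_le)
  qed (use X in measurable)
  then show "conv_prob_zero M (\<lambda>n \<omega>. (A n *v X n \<omega> + R n \<omega>) - A0 *v X n \<omega>)"
    by (simp add: matrix_vector_mult_diff_rdistrib algebra_simps)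
qed (use M X R in auto)

section \<open>Limits under a spherical law\<close>

lemma spherical_distr_orthogonal:
  fixes L :: "(real^'n) measure" and g :: "real^'n \<Rightarrow> 'b::topological_space"
  assumes sph: "spherical L" and L: "sets L = sets borel" and U: "orthogonal_matrix U"
    and g: "g \<in> borel_measurable borel"
  shows "distr L borel (\<lambda>z. g (U *v z)) = distr L borel g"
proof -
  have "(\<lambda>z. U *v z) \<in> L \<rightarrow>\<^sub>M borel"
    unfolding measurable_cong_sets[OF L refl] by (intro borel_measurable_continuous_onI continuous_intros)
  then have "distr L borel (\<lambda>z. g (U *v z)) = distr (distr L borel (\<lambda>z. U *v z)) borel g"
    using g by (simp add: distr_distr o_def)
  also have "distr L borel (\<lambda>z. U *v z) = L"
    using sph U unfolding spherical_def by blast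
  finally show ?thesis .
qed

lemma spherical_distr_factor:
  fixes L :: "(real^'n) measure"
  assumes sph: "spherical L" and L: "sets L = sets borel"
    and AA: "A ** transpose A = tanproj \<nu>" and \<nu>: "norm \<nu> = 1"
  shows "distr L borel (\<lambda>z. A *v z) = distr L borel (\<lambda>z. tanproj \<nu> *v z)"
proof -
  obtain U where U: "orthogonal_matrix U" and A: "A = tanproj \<nu> ** U"
    using tanproj_factorization[OF AA \<nu>] by blast
  have "distr L borel (\<lambda>z. A *v z) = distr L borel (\<lambda>z. tanproj \<nu> *v (U *v z))"
    by (simp add: A matrix_vector_mul_assoc)
  also have "\<dots> = distr L borel (\<lambda>z. tanproj \<nu> *v z)"
    by (intro spherical_distr_orthogonal[OF sph L U] borel_measurable_continuous_onI continuous_intros)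
  finally show ?thesis .
qed

lemma spherical_distr_norm_tanproj:
  fixes L :: "(real^'n::{finite,wellorder}) measure"
  assumes sph: "spherical L" and L: "sets L = sets borel" and \<nu>: "norm \<nu> = 1"
  shows "distr L borel (\<lambda>z. (norm (tanproj \<nu> *v z))\<^sup>2) = zeta2_last_dropped L"
proof -
  obtain W where W: "orthogonal_matrix W"
    and tan: "\<And>z. (norm (tanproj \<nu> *v z))\<^sup>2 = (\<Sum>i\<in>UNIV - {Max UNIV}. ((W *v z) $ i)\<^sup>2)"
    using norm_tanproj_eq_sum_drop_last[OF \<nu>] by blast
  have "distr L borel (\<lambda>z. (norm (tanproj \<nu> *v z))\<^sup>2)
      = distr L borel (\<lambda>z. \<Sum>i\<in>UNIV - {Max UNIV}. ((W *v z) $ i)\<^sup>2)"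
    by (simp add: tan)
  also have "\<dots> = distr L borel (\<lambda>z. \<Sum>i\<in>UNIV - {Max UNIV}. (z $ i)\<^sup>2)"
    by (intro spherical_distr_orthogonal[OF sph L W] borel_measurable_continuous_onI continuous_intros)
  finally show ?thesis
    by (simp add: zeta2_last_dropped_def)
qed

context
  fixes M :: "nat \<Rightarrow> 'a measure" and Z R :: "nat \<Rightarrow> 'a \<Rightarrow> real^'n::{finite,wellorder}"
    and A :: "nat \<Rightarrow> real^'n::{finite,wellorder}^'n::{finite,wellorder}"
    and \<nu> :: "nat \<Rightarrow> real^'n::{finite,wellorder}" and L :: "(real^'n::{finite,wellorder}) measure"
  assumes M: "\<And>n. prob_space (M n)"
    and Z: "\<And>n. Z n \<in> borel_measurable (M n)" and R: "\<And>n. R n \<in> borel_measurable (M n)"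
    and L: "prob_space L" "sets L = sets borel" and sph: "spherical L"
    and conv: "conv_distr M Z L" and R0: "conv_prob_zero M R"
    and \<nu>: "\<And>n. norm (\<nu> n) = 1" and AA: "\<And>n. A n ** transpose (A n) = tanproj (\<nu> n)"
begin

lemma conv_distr_tanproj_subsubseq:
  fixes r :: "nat \<Rightarrow> nat"
  assumes r: "strict_mono r"
  shows "\<exists>s \<mu>. strict_mono s \<and> (\<lambda>n. \<nu> (r (s n))) \<longlonglongrightarrow> \<mu> \<and> norm \<mu> = 1 \<and>
    conv_distr (\<lambda>n. M (r (s n))) (\<lambda>n \<omega>. A (r (s n)) *v Z (r (s n)) \<omega> + R (r (s n)) \<omega>)
      (distr L borel (\<lambda>z. tanproj \<mu> *v z))"
proof -
  obtain \<mu> s1 where \<mu>: "\<mu> \<in> sphere 0 1" and s1: "strict_mono s1"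
    and lim\<nu>: "(\<lambda>n. \<nu> (r (s1 n))) \<longlonglongrightarrow> \<mu>"
    using compact_sphere[THEN compact_imp_seq_compact, THEN seq_compactE, of "\<lambda>n. \<nu> (r n)" 0 1] \<nu>
    by (auto simp: o_def)
  obtain A0 s2 where s2: "strict_mono s2" and limA: "(\<lambda>n. A (r (s1 (s2 n)))) \<longlonglongrightarrow> A0"
    using compact_cball[THEN compact_imp_seq_compact, THEN seq_compactE,
        of "\<lambda>n. A (r (s1 n))" 0 "real CARD('n)"] norm_le_card_of_mult_transpose_tanproj[OF AA]
    by (simp add: o_def) blast
  define s where "s = s1 \<circ> s2"
  have s: "strict_mono s" and rs: "strict_mono (r \<circ> s)"
    using r s1 s2 by (simp_all add: s_def strict_mono_o)
  have lim\<nu>': "(\<lambda>n. \<nu> (r (s n))) \<longlonglongrightarrow> \<mu>"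
    using LIMSEQ_subseq_LIMSEQ[OF lim\<nu> s2] by (simp add: s_def o_def)
  have "(\<lambda>n. A (r (s n)) ** transpose (A (r (s n)))) \<longlonglongrightarrow> A0 ** transpose A0"
    using limA unfolding s_def o_def matrix_matrix_mult_def transpose_def by (intro tendsto_intros)
  moreover have "(\<lambda>n. A (r (s n)) ** transpose (A (r (s n)))) \<longlonglongrightarrow> tanproj \<mu>"
    using lim\<nu>' unfolding AA tanproj_def outer_def by (intro tendsto_intros)
  ultimately have A0: "A0 ** transpose A0 = tanproj \<mu>"
    by (rule LIMSEQ_unique)
  have "conv_distr (\<lambda>n. M (r (s n))) (\<lambda>n \<omega>. A (r (s n)) *v Z (r (s n)) \<omega> + R (r (s n)) \<omega>)
      (distr L borel (\<lambda>z. A0 *v z))"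
    using conv_distr_affine[OF M Z R L conv_distr_subseq[OF conv rs] conv_prob_zero_subseq[OF R0 rs]]
      limA by (simp add: s_def)
  moreover have "distr L borel (\<lambda>z. A0 *v z) = distr L borel (\<lambda>z. tanproj \<mu> *v z)"
    using \<mu> by (intro spherical_distr_factor[OF sph L(2) A0]) simp
  ultimately show ?thesis
    using s lim\<nu>' \<mu> by auto
qed

lemma conv_distr_tanproj:
  assumes lim: "\<nu> \<longlonglongrightarrow> \<mu>"
  shows "conv_distr M (\<lambda>n \<omega>. A n *v Z n \<omega> + R n \<omega>) (distr L borel (\<lambda>z. tanproj \<mu> *v z))"
proof (rule conv_distr_of_subsubseq)
  fix r :: "nat \<Rightarrow> nat" assume "strict_mono r"
  then obtain s \<mu>' where s: "strict_mono s" and lim': "(\<lambda>n. \<nu> (r (s n))) \<longlonglongrightarrow> \<mu>'"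
    and conv': "conv_distr (\<lambda>n. M (r (s n))) (\<lambda>n \<omega>. A (r (s n)) *v Z (r (s n)) \<omega> + R (r (s n)) \<omega>)
      (distr L borel (\<lambda>z. tanproj \<mu>' *v z))"
    using conv_distr_tanproj_subsubseq by blast
  have "(\<lambda>n. \<nu> (r (s n))) \<longlonglongrightarrow> \<mu>"
    using LIMSEQ_subseq_LIMSEQ[OF lim strict_mono_o[OF \<open>strict_mono r\<close> s]] by (simp add: o_def)
  then have "\<mu>' = \<mu>"
    using lim' LIMSEQ_unique by blast
  then show "\<exists>s. strict_mono s \<and> conv_distr (\<lambda>n. M (r (s n)))
      (\<lambda>n \<omega>. A (r (s n)) *v Z (r (s n)) \<omega> + R (r (s n)) \<omega>) (distr L borel (\<lambda>z. tanproj \<mu> *v z))"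
    using s conv' by blast
qed

lemma conv_distr_sq_norm_zeta2:
  "conv_distr M (\<lambda>n \<omega>. (norm (A n *v Z n \<omega> + R n \<omega>))\<^sup>2) (zeta2_last_dropped L)"
proof (rule conv_distr_of_subsubseq)
  fix r :: "nat \<Rightarrow> nat" assume "strict_mono r"
  then obtain s \<mu> where s: "strict_mono s" and \<mu>: "norm \<mu> = 1"
    and conv': "conv_distr (\<lambda>n. M (r (s n))) (\<lambda>n \<omega>. A (r (s n)) *v Z (r (s n)) \<omega> + R (r (s n)) \<omega>)
      (distr L borel (\<lambda>z. tanproj \<mu> *v z))"
    using conv_distr_tanproj_subsubseq by blast
  have "continuous_on UNIV (\<lambda>y::real^'n::{finite,wellorder}. (norm y)\<^sup>2)"
    by (intro continuous_intros)
  from conv_distr_continuous_map[OF _ conv' this]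
  have "conv_distr (\<lambda>n. M (r (s n))) (\<lambda>n \<omega>. (norm (A (r (s n)) *v Z (r (s n)) \<omega> + R (r (s n)) \<omega>))\<^sup>2)
      (distr (distr L borel (\<lambda>z. tanproj \<mu> *v z)) borel (\<lambda>y. (norm y)\<^sup>2))"
    by simp
  moreover have "distr (distr L borel (\<lambda>z. tanproj \<mu> *v z)) borel (\<lambda>y. (norm y)\<^sup>2) = zeta2_last_dropped L"
  proof -
    have "(\<lambda>z. tanproj \<mu> *v z) \<in> L \<rightarrow>\<^sub>M borel"
      unfolding measurable_cong_sets[OF L(2) refl] by (intro borel_measurable_continuous_onI continuous_intros)
    then show ?thesis
      by (simp add: distr_distr o_def spherical_distr_norm_tanproj[OF sph L(2) \<mu>])
  qed
  ultimately show "\<exists>s. strict_mono s \<and> conv_distr (\<lambda>n. M (r (s n)))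
      (\<lambda>n \<omega>. (norm (A (r (s n)) *v Z (r (s n)) \<omega> + R (r (s n)) \<omega>))\<^sup>2) (zeta2_last_dropped L)"
    using s by auto
qed

end

lemma conv_prob_zero_sph_proj_remainder:
  fixes Z :: "nat \<Rightarrow> 'a \<Rightarrow> real^'m" and t :: "nat \<Rightarrow> real^'n"
    and B :: "nat \<Rightarrow> real^'m^'n" and \<Gamma> :: "nat \<Rightarrow> real^'n^'k"
  assumes M: "\<And>n. prob_space (M n)" and Z: "\<And>n. Z n \<in> borel_measurable (M n)"
    and L: "prob_space L" "sets L = sets borel" and conv: "conv_distr M Z L"
    and t: "\<And>n. t n \<noteq> 0" and eps: "eps \<in> O(\<lambda>n. norm (t n))"
    and \<Gamma>: "(\<lambda>n. opnorm (\<Gamma> n) * (opnorm (B n))\<^sup>2 / norm (t n)) \<longlonglongrightarrow> 0"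
  shows "conv_prob_zero M (\<lambda>n \<omega>.
    \<Gamma> n *v ((norm (t n) *\<^sub>R tanproj (sph_proj (t n)) + eps n *\<^sub>R (mat 1 - tanproj (sph_proj (t n))))
      *v (sph_proj (t n + B n *v Z n \<omega>) - sph_proj (t n)))
    - (\<Gamma> n ** tanproj (sph_proj (t n)) ** B n) *v Z n \<omega>)"
proof -
  obtain c where c: "eventually (\<lambda>n. norm (eps n) \<le> c * norm (norm (t n))) sequentially"
    using eps by (elim landau_o.bigE)
  show ?thesis
  proof (rule conv_prob_zero_of_bound[OF M Z L conv, where k=2])
    show "(\<lambda>n. 10 * (1 + c) * (opnorm (\<Gamma> n) * (opnorm (B n))\<^sup>2 / norm (t n))) \<longlonglongrightarrow> 0"
      using \<Gamma> by (rule tendsto_mult_right_zero)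
    show "eventually (\<lambda>n. \<forall>\<omega>\<in>space (M n).
        norm (\<Gamma> n *v ((norm (t n) *\<^sub>R tanproj (sph_proj (t n)) + eps n *\<^sub>R (mat 1 - tanproj (sph_proj (t n))))
          *v (sph_proj (t n + B n *v Z n \<omega>) - sph_proj (t n)))
        - (\<Gamma> n ** tanproj (sph_proj (t n)) ** B n) *v Z n \<omega>)
      \<le> 10 * (1 + c) * (opnorm (\<Gamma> n) * (opnorm (B n))\<^sup>2 / norm (t n)) * norm (Z n \<omega>) ^ 2) sequentially"
      using c
    proof eventually_elim
      case (elim n)
      then have "\<bar>eps n\<bar> \<le> c * norm (t n)"
        by simp
      then show ?case
        using sph_proj_linearization_bound[OF t] by blast
    qed
  qed
qed

theorem theorem6p1:
  fixes M :: "nat \<Rightarrow> 'a measure"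
    and tt :: "nat \<Rightarrow> 'a \<Rightarrow> real^'s::{finite,wellorder}"
    and t :: "nat \<Rightarrow> real^'s::{finite,wellorder}"
    and B Gam :: "nat \<Rightarrow> real^'s::{finite,wellorder}^'s::{finite,wellorder}"
    and L :: "(real^'s::{finite,wellorder}) measure"
    and eps :: "nat \<Rightarrow> real"
    and D :: real
  defines "Z \<equiv> (\<lambda>n \<omega>. matrix_inv (B n) *v (tt n \<omega> - t n))"
    and "mu \<equiv> (\<lambda>n. sph_proj (t n))"
    and "mut \<equiv> (\<lambda>n \<omega>. sph_proj (tt n \<omega>))"
    and "G \<equiv> (\<lambda>n. norm (t n) *\<^sub>R tanproj (sph_proj (t n)) + eps n *\<^sub>R (mat 1 - tanproj (sph_proj (t n))))"
  assumes M: "\<And>n. prob_space (M n)"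
    and tt_meas: "\<And>n. tt n \<in> borel_measurable (M n)"
    and L: "prob_space L" "sets L = sets borel"
    and B_inv: "\<And>n. invertible (B n)"
    and B_lim: "(\<lambda>n. opnorm (B n)) \<longlonglongrightarrow> 0"
    and Z_lim: "conv_distr M Z L"
    and t_nz: "\<And>n. t n \<noteq> 0"
    and t_dist: "\<And>n. infdist (t n) (sphere 0 1) \<le> D"
    and Bt: "(\<lambda>n. opnorm (B n) / norm (t n)) \<longlonglongrightarrow> 0"
    and eps_O: "eps \<in> O(\<lambda>n. norm (t n))"
    and Gam_lim: "(\<lambda>n. opnorm (Gam n) * (opnorm (B n))\<^sup>2 / norm (t n)) \<longlonglongrightarrow> 0"
  shows "conv_prob_zero M (\<lambda>n \<omega>. Gam n *v (G n *v (mut n \<omega> - mu n))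
                                 - (Gam n ** tanproj (mu n) ** B n) *v Z n \<omega>)
       \<and> ((spherical L \<and>
            (\<forall>n. Gam n ** tanproj (mu n) ** B n ** transpose (B n) ** tanproj (mu n)
                   ** transpose (Gam n) = tanproj (mu n)))
          \<longrightarrow> (\<forall>\<mu>. (mu \<longlonglongrightarrow> \<mu>) \<and> norm \<mu> = 1 \<longrightarrow>
                 conv_distr M (\<lambda>n \<omega>. Gam n *v (G n *v (mut n \<omega> - mu n)))
                   (distr L borel (\<lambda>z. tanproj \<mu> *v z)))
            \<and> conv_distr M (\<lambda>n \<omega>. (mut n \<omega> - mu n) \<bullet>
                   ((G n ** transpose (Gam n) ** Gam n ** G n) *v (mut n \<omega> - mu n)))
                (zeta2_last_dropped L))"
proof -
  have mu: "\<And>n. norm (mu n) = 1"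
    using t_nz by (simp add: mu_def sph_proj_def)
  have tt: "\<And>n \<omega>. tt n \<omega> = t n + B n *v Z n \<omega>"
    by (simp add: Z_def matrix_vector_mul_assoc matrix_mul_matrix_inv_right[OF B_inv])
  have Zm: "\<And>n. Z n \<in> borel_measurable (M n)"
    using tt_meas by (simp add: Z_def)
  define A where "A = (\<lambda>n. Gam n ** tanproj (mu n) ** B n)"
  define R where "R = (\<lambda>n \<omega>. Gam n *v (G n *v (mut n \<omega> - mu n)) - A n *v Z n \<omega>)"
  have Rm: "R n \<in> borel_measurable (M n)" for n
    using Zm[of n] measurable_compose[OF tt_meas[of n] borel_measurable_sph_proj]
    unfolding R_def mut_def by measurable
  have R0: "conv_prob_zero M R"
    using conv_prob_zero_sph_proj_remainder[OF M Zm L Z_lim t_nz eps_O Gam_lim]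
    by (simp add: R_def A_def G_def mu_def mut_def tt)
  moreover have "(\<forall>\<mu>. (mu \<longlonglongrightarrow> \<mu>) \<and> norm \<mu> = 1 \<longrightarrow>
      conv_distr M (\<lambda>n \<omega>. A n *v Z n \<omega> + R n \<omega>) (distr L borel (\<lambda>z. tanproj \<mu> *v z)))
    \<and> conv_distr M (\<lambda>n \<omega>. (norm (A n *v Z n \<omega> + R n \<omega>))\<^sup>2) (zeta2_last_dropped L)"
    if sph: "spherical L" and "\<forall>n. Gam n ** tanproj (mu n) ** B n ** transpose (B n) ** tanproj (mu n)
      ** transpose (Gam n) = tanproj (mu n)"
  proof -
    have AA: "\<And>n. A n ** transpose (A n) = tanproj (mu n)"
      using that(2) by (simp add: A_def matrix_transpose_mul matrix_mul_assoc)
    show ?thesis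
      using conv_distr_tanproj[where A=A and \<nu>=mu, OF M Zm Rm L sph Z_lim R0 mu AA]
        conv_distr_sq_norm_zeta2[where A=A and \<nu>=mu, OF M Zm Rm L sph Z_lim R0 mu AA] by blast
  qed
  moreover have "(\<lambda>n \<omega>. Gam n *v (G n *v (mut n \<omega> - mu n)) - (Gam n ** tanproj (mu n) ** B n) *v Z n \<omega>) = R"
    by (simp add: R_def A_def)
  moreover have "(mut n \<omega> - mu n) \<bullet> ((G n ** transpose (Gam n) ** Gam n ** G n) *v (mut n \<omega> - mu n))
      = (norm (Gam n *v (G n *v (mut n \<omega> - mu n))))\<^sup>2" for n \<omega>
    unfolding G_def by (rule quadratic_form_eq_power2_norm[OF transpose_tanproj_blend])
  moreover have "Gam n *v (G n *v (mut n \<omega> - mu n)) = A n *v Z n \<omega> + R n \<omega>" for n \<omega>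
    by (simp add: R_def)
  ultimately show ?thesis
    by simp
qed

end
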